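(* Let $K$ be a multiplicative Lie algebra and $p:K\to K/\mathcal Z(K)$ the natural projection, $p'=p|_{{}^M[K,K]}$. Then there exists a homomorphism $\Delta:\tilde M(K/\mathcal Z(K))\to{}^M[K,K]$ such that the sequence $$1\to\ker\Delta\to\tilde M(K/\mathcal Z(K))\xrightarrow{\Delta}{}^M[K,K]\xrightarrow{p'}{}^M\big[K/\mathcal Z(K),K/\mathcal Z(K)\big]\to1$$ is exact.
   Context: A multiplicative Lie algebra is a group $(G,\cdot)$ with a binary operation $\star$ such that for all $x,y,z\in G$: $x\star x=1$; $x\star(yz)=(x\star y)\,{}^y(x\star z)$; $(xy)\star z={}^x(y\star z)(x\star z)$; $((x\star y)\star{}^yz)((y\star z)\star{}^zx)((z\star x)\star{}^xy)=1$; ${}^z(x\star y)={}^zx\star{}^zy$, where ${}^xy=xyx^{-1}$. $Z(G)$ is the group center, $LZ(G)=\{x: x\star y=1\ \forall y\}$, $\mathcal Z(G)=LZ(G)\cap Z(G)$; $[x,y]$ is the group commutator. For ideals $A,B$ of $G$, ${}^M[A,B]=(A\star B)[A,B]$, where $A\star B$ is generated by all $a\star b$ ($a\in A,b\in B$); in particular ${}^M[G,G]=(G\star G)[G,G]$. The Schur multiplier of a multiplicative Lie algebra $Q$ is $\tilde M(Q)=({}^M[F,F]\cap R)/{}^M[R,F]$ for any free presentation $1\to R\to F\to Q\to1$ ($F$ a free multiplicative Lie algebra); it is independent of the presentation up to isomorphism. *)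

theory Defs
  imports "HOL-Algebra.Algebra"
begin

record 'a mul_lie = "'a monoid" +
  lstar :: "'a \<Rightarrow> 'a \<Rightarrow> 'a"

definition conjg :: "'a mul_lie \<Rightarrow> 'a \<Rightarrow> 'a \<Rightarrow> 'a" where
  "conjg G x y = x \<otimes>\<^bsub>G\<^esub> y \<otimes>\<^bsub>G\<^esub> inv\<^bsub>G\<^esub> x"

definition gcomm :: "'a mul_lie \<Rightarrow> 'a \<Rightarrow> 'a \<Rightarrow> 'a" where
  "gcomm G x y = x \<otimes>\<^bsub>G\<^esub> y \<otimes>\<^bsub>G\<^esub> inv\<^bsub>G\<^esub> x \<otimes>\<^bsub>G\<^esub> inv\<^bsub>G\<^esub> y"

definition mult_lie_alg :: "'a mul_lie \<Rightarrow> bool" where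
  "mult_lie_alg G \<longleftrightarrow> group G \<and>
    (\<forall>x\<in>carrier G. \<forall>y\<in>carrier G. lstar G x y \<in> carrier G) \<and>
    (\<forall>x\<in>carrier G. lstar G x x = \<one>\<^bsub>G\<^esub>) \<and>
    (\<forall>x\<in>carrier G. \<forall>y\<in>carrier G. \<forall>z\<in>carrier G.
       lstar G x (y \<otimes>\<^bsub>G\<^esub> z) = lstar G x y \<otimes>\<^bsub>G\<^esub> conjg G y (lstar G x z)) \<and>
    (\<forall>x\<in>carrier G. \<forall>y\<in>carrier G. \<forall>z\<in>carrier G.
       lstar G (x \<otimes>\<^bsub>G\<^esub> y) z = conjg G x (lstar G y z) \<otimes>\<^bsub>G\<^esub> lstar G x z) \<and>
    (\<forall>x\<in>carrier G. \<forall>y\<in>carrier G. \<forall>z\<in>carrier G.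
       lstar G (lstar G x y) (conjg G y z) \<otimes>\<^bsub>G\<^esub> lstar G (lstar G y z) (conjg G z x)
         \<otimes>\<^bsub>G\<^esub> lstar G (lstar G z x) (conjg G x y) = \<one>\<^bsub>G\<^esub>) \<and>
    (\<forall>x\<in>carrier G. \<forall>y\<in>carrier G. \<forall>z\<in>carrier G.
       conjg G z (lstar G x y) = lstar G (conjg G z x) (conjg G z y))"

text \<open>Group centre Z(G), Lie centre LZ(G), and their intersection (the paper's calligraphic Z).\<close>
definition grp_center :: "'a mul_lie \<Rightarrow> 'a set" where
  "grp_center G = {x \<in> carrier G. \<forall>y\<in>carrier G. x \<otimes>\<^bsub>G\<^esub> y = y \<otimes>\<^bsub>G\<^esub> x}"

definition lie_center :: "'a mul_lie \<Rightarrow> 'a set" where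
  "lie_center G = {x \<in> carrier G. \<forall>y\<in>carrier G. lstar G x y = \<one>\<^bsub>G\<^esub>}"

definition mla_center :: "'a mul_lie \<Rightarrow> 'a set" where
  "mla_center G = lie_center G \<inter> grp_center G"

definition Mcomm :: "'a mul_lie \<Rightarrow> 'a set \<Rightarrow> 'a set \<Rightarrow> 'a set" where
  "Mcomm G A B = generate G ({lstar G a b | a b. a \<in> A \<and> b \<in> B} \<union>
                             {gcomm G a b | a b. a \<in> A \<and> b \<in> B})"

definition mla_hom :: "'a mul_lie \<Rightarrow> 'b mul_lie \<Rightarrow> ('a \<Rightarrow> 'b) set" where
  "mla_hom G H = {h \<in> hom G H. \<forall>x\<in>carrier G. \<forall>y\<in>carrier G.
                    h (lstar G x y) = lstar H (h x) (h y)}"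

definition quot_mla :: "'a mul_lie \<Rightarrow> 'a set \<Rightarrow> 'a set mul_lie" where
  "quot_mla G N = \<lparr> carrier = rcosets\<^bsub>G\<^esub> N, monoid.mult = set_mult G, one = N,
     lstar = (\<lambda>A B. N #>\<^bsub>G\<^esub> lstar G (SOME a. a \<in> A) (SOME b. b \<in> B)) \<rparr>"

text \<open>Free multiplicative Lie algebra F on B \<subseteq> carrier F, via the universal property
  (targets range over multiplicative Lie algebras whose carrier lives in the element type
  of F).\<close>
definition free_mla :: "'a mul_lie \<Rightarrow> 'a set \<Rightarrow> bool" where
  "free_mla F B \<longleftrightarrow> mult_lie_alg F \<and> B \<subseteq> carrier F \<and>
    (\<forall>T :: 'a mul_lie. \<forall>f. mult_lie_alg T \<and> (\<forall>x\<in>B. f x \<in> carrier T) \<longrightarrow>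
       (\<exists>h \<in> mla_hom F T. \<forall>x\<in>B. h x = f x) \<and>
       (\<forall>h1 \<in> mla_hom F T. \<forall>h2 \<in> mla_hom F T.
          (\<forall>x\<in>B. h1 x = h2 x) \<longrightarrow> (\<forall>y\<in>carrier F. h1 y = h2 y)))"

text \<open>The group (M[F,F] \<inter> R) / M[R,F] computing the Schur multiplier from the free
  presentation 1 \<rightarrow> R \<rightarrow> F \<rightarrow> Q \<rightarrow> 1.\<close>
definition schur_quot :: "'a mul_lie \<Rightarrow> 'a set \<Rightarrow> 'a set monoid" where
  "schur_quot F R = (F\<lparr>carrier := Mcomm F (carrier F) (carrier F) \<inter> R\<rparr>) Mod (Mcomm F R (carrier F))"

end

theory Submission
  imports Defs
begin

text \<open>Since \<open>\<pi>\<close> maps \<open>F\<close> onto \<open>K/Z(K)\<close>, choosing preimages in \<open>K\<close> of the images of the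
  free generators yields a lift \<open>\<phi> : F \<rightarrow> K\<close> of \<open>\<pi>\<close>. It maps \<open>R = ker \<pi>\<close> into the centre
  \<open>Z(K)\<close>, hence kills \<open>M[R,F]\<close>; and since \<open>K = Z(K) \<phi>(F)\<close> while both the Lie product and
  the group commutator ignore central factors, it maps \<open>M[F,F]\<close> onto \<open>M[K,K]\<close>. So \<open>\<phi>\<close>
  induces \<open>\<Delta>\<close> on \<open>(M[F,F] \<inter> R)/M[R,F]\<close> with image \<open>M[K,K] \<inter> Z(K)\<close>, the kernel of the
  projection \<open>M[K,K] \<rightarrow> M[K/Z(K),K/Z(K)]\<close>, which is onto because images of
  \<open>M[_,_]\<close> under surjections are again of this form.

  The freeness of \<open>F\<close> is only available for targets living in the element type of \<open>F\<close>.
  If that type is infinite, the subalgebra of \<open>K\<close> generated by the chosen preimages is a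
  quotient of a term algebra and can be transported into it. If it is finite, \<open>F\<close> turns out
  to be cyclic, so \<open>K/Z(K)\<close> is cyclic, which forces \<open>K = Z(K)\<close>.\<close>

section \<open>Multiplicative Lie algebras and their centre\<close>

definition mla_subalg :: "'a mul_lie \<Rightarrow> 'a set \<Rightarrow> bool" where
  "mla_subalg G D \<longleftrightarrow> subgroup D G \<and> (\<forall>x\<in>D. \<forall>y\<in>D. lstar G x y \<in> D)"

locale mult_lie =
  fixes G :: "'a mul_lie" (structure)
  assumes mult_lie_alg: "mult_lie_alg G"
begin

sublocale group G
  using mult_lie_alg unfolding mult_lie_alg_def by simp

lemma lstar_closed [intro, simp]:
    "x \<in> carrier G \<Longrightarrow> y \<in> carrier G \<Longrightarrow> lstar G x y \<in> carrier G"
  and lstar_self [simp]: "x \<in> carrier G \<Longrightarrow> lstar G x x = \<one>"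
  and lstar_mult_right: "x \<in> carrier G \<Longrightarrow> y \<in> carrier G \<Longrightarrow> z \<in> carrier G \<Longrightarrow>
    lstar G x (y \<otimes> z) = lstar G x y \<otimes> conjg G y (lstar G x z)"
  and lstar_mult_left: "x \<in> carrier G \<Longrightarrow> y \<in> carrier G \<Longrightarrow> z \<in> carrier G \<Longrightarrow>
    lstar G (x \<otimes> y) z = conjg G x (lstar G y z) \<otimes> lstar G x z"
  and conjg_lstar: "x \<in> carrier G \<Longrightarrow> y \<in> carrier G \<Longrightarrow> z \<in> carrier G \<Longrightarrow>
    conjg G z (lstar G x y) = lstar G (conjg G z x) (conjg G z y)"
  using mult_lie_alg unfolding mult_lie_alg_def by blast+

lemma conjg_closed [intro, simp]: "x \<in> carrier G \<Longrightarrow> y \<in> carrier G \<Longrightarrow> conjg G x y \<in> carrier G"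
  and conjg_one [simp]: "x \<in> carrier G \<Longrightarrow> conjg G x \<one> = \<one>"
  unfolding conjg_def by simp_all

lemma conjg_eq_one_iff [simp]:
  assumes "x \<in> carrier G" "y \<in> carrier G"
  shows "conjg G x y = \<one> \<longleftrightarrow> y = \<one>"
proof
  assume "conjg G x y = \<one>"
  then have "x \<otimes> y \<otimes> inv x \<otimes> x = x" using assms unfolding conjg_def by simp
  then show "y = \<one>" using assms by (simp add: m_assoc)
qed (use assms in simp)

lemma gcomm_closed [intro, simp]: "x \<in> carrier G \<Longrightarrow> y \<in> carrier G \<Longrightarrow> gcomm G x y \<in> carrier G"
  unfolding gcomm_def by simp

lemma lstar_one_right [simp]: "x \<in> carrier G \<Longrightarrow> lstar G x \<one> = \<one>"
  using lstar_mult_right[of x \<one> \<one>] by simp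

lemma lstar_one_left [simp]: "x \<in> carrier G \<Longrightarrow> lstar G \<one> x = \<one>"
  using lstar_mult_left[of \<one> \<one> x] by simp

lemma mla_center_closed: "z \<in> mla_center G \<Longrightarrow> z \<in> carrier G"
  and lstar_center_left [simp]: "z \<in> mla_center G \<Longrightarrow> y \<in> carrier G \<Longrightarrow> lstar G z y = \<one>"
  and center_commute: "z \<in> mla_center G \<Longrightarrow> y \<in> carrier G \<Longrightarrow> z \<otimes> y = y \<otimes> z"
  unfolding mla_center_def lie_center_def grp_center_def by auto

lemma center_left_commute:
  "w \<in> mla_center G \<Longrightarrow> x \<in> carrier G \<Longrightarrow> y \<in> carrier G \<Longrightarrow> x \<otimes> (w \<otimes> y) = w \<otimes> (x \<otimes> y)"
  using center_commute[of w x] by (simp add: mla_center_closed m_assoc[symmetric])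

lemma conjg_center [simp]: "z \<in> mla_center G \<Longrightarrow> y \<in> carrier G \<Longrightarrow> conjg G z y = y"
proof -
  assume z: "z \<in> mla_center G" and y: "y \<in> carrier G"
  then have "conjg G z y = y \<otimes> z \<otimes> inv z"
    unfolding conjg_def using center_commute[OF z y] by simp
  then show ?thesis using y mla_center_closed[OF z] by (simp add: m_assoc)
qed

lemma lstar_center_right [simp]:
  assumes z: "z \<in> mla_center G" and y: "y \<in> carrier G"
  shows "lstar G y z = \<one>"
proof -
  have zG: "z \<in> carrier G" using z by (rule mla_center_closed)
  have "conjg G y (lstar G y z) = lstar G y (y \<otimes> z)"
    using lstar_mult_right[of y y z] y zG by simp
  also have "\<dots> = lstar G (y \<otimes> z) (y \<otimes> z)"
    using lstar_mult_left[of y z "y \<otimes> z"] y z zG by simp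
  also have "\<dots> = \<one>" using y zG by simp
  finally show ?thesis using y zG by simp
qed

lemma subgroup_mla_center: "subgroup (mla_center G) G"
proof (rule subgroupI)
  show "mla_center G \<subseteq> carrier G" using mla_center_closed by blast
  show "mla_center G \<noteq> {}"
    unfolding mla_center_def lie_center_def grp_center_def by auto
next
  fix z assume z: "z \<in> mla_center G"
  have zG: "z \<in> carrier G" using z by (rule mla_center_closed)
  have "inv z \<otimes> y = y \<otimes> inv z" if y: "y \<in> carrier G" for y
  proof -
    have "inv z \<otimes> y = inv z \<otimes> (y \<otimes> z) \<otimes> inv z" using zG y by (simp add: m_assoc)
    also have "\<dots> = inv z \<otimes> (z \<otimes> y) \<otimes> inv z" using center_commute[OF z y] by simp
    also have "\<dots> = y \<otimes> inv z" using zG y by (simp add: m_assoc[symmetric])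
    finally show ?thesis .
  qed
  moreover have "lstar G (inv z) y = \<one>" if "y \<in> carrier G" for y
    using lstar_mult_left[of z "inv z" y] z zG that by simp
  ultimately show "inv z \<in> mla_center G"
    using zG unfolding mla_center_def lie_center_def grp_center_def by blast
next
  fix z w assume z: "z \<in> mla_center G" and w: "w \<in> mla_center G"
  have zG: "z \<in> carrier G" and wG: "w \<in> carrier G"
    using z w by (simp_all add: mla_center_closed)
  have "z \<otimes> w \<otimes> y = y \<otimes> (z \<otimes> w)" if y: "y \<in> carrier G" for y
  proof -
    have "z \<otimes> w \<otimes> y = z \<otimes> (y \<otimes> w)" using center_commute[OF w y] zG wG y by (simp add: m_assoc)
    also have "\<dots> = y \<otimes> (z \<otimes> w)" using center_commute[OF z y] zG wG y by (simp add: m_assoc[symmetric])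
    finally show ?thesis .
  qed
  moreover have "lstar G (z \<otimes> w) y = \<one>" if "y \<in> carrier G" for y
    using lstar_mult_left[of z w y] z w zG wG that by simp
  ultimately show "z \<otimes> w \<in> mla_center G"
    using zG wG unfolding mla_center_def lie_center_def grp_center_def by blast
qed

lemma normal_mla_center: "mla_center G \<lhd> G"
  unfolding normal_inv_iff
proof (intro conjI subgroup_mla_center ballI)
  fix x z assume x: "x \<in> carrier G" and z: "z \<in> mla_center G"
  then have "x \<otimes> z \<otimes> inv x = z \<otimes> x \<otimes> inv x" using center_commute[OF z x] by simp
  then show "x \<otimes> z \<otimes> inv x \<in> mla_center G"
    using x z mla_center_closed[OF z] by (simp add: m_assoc)
qed

lemma lstar_mult_center:
  assumes "z \<in> mla_center G" "w \<in> mla_center G" "x \<in> carrier G" "y \<in> carrier G"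
  shows "lstar G (z \<otimes> x) (w \<otimes> y) = lstar G x y"
  using assms lstar_mult_left[of z x "w \<otimes> y"] lstar_mult_right[of x w y]
  by (simp add: mla_center_closed)

lemma gcomm_mult_center:
  assumes z: "z \<in> mla_center G" and w: "w \<in> mla_center G"
    and x: "x \<in> carrier G" and y: "y \<in> carrier G"
  shows "gcomm G (z \<otimes> x) (w \<otimes> y) = gcomm G x y"
proof -
  have zG: "z \<in> carrier G" and wG: "w \<in> carrier G"
    using z w by (simp_all add: mla_center_closed)
  have wy: "w \<otimes> y \<in> carrier G" using wG y by simp
  have "inv z \<otimes> inv (w \<otimes> y) = inv (w \<otimes> y) \<otimes> inv z"
    using center_commute[OF subgroup.m_inv_closed[OF subgroup_mla_center z] inv_closed[OF wy]] .
  then have "gcomm G (z \<otimes> x) (w \<otimes> y) = conjg G z (gcomm G x (w \<otimes> y))"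
    using zG x wy unfolding gcomm_def conjg_def by (simp add: m_assoc inv_mult_group)
  also have "gcomm G x (w \<otimes> y) = conjg G w (gcomm G x y)"
    using center_commute[OF w x] wG x y unfolding gcomm_def conjg_def
    by (simp add: m_assoc[symmetric] inv_mult_group)
  finally show ?thesis using z w x y by simp
qed

lemma mla_subalg_carrier: "mla_subalg G (carrier G)"
  unfolding mla_subalg_def by (simp add: subgroup_self)

end

section \<open>Images, homomorphisms and the quotient by the centre\<close>

lemma group_image:
  assumes "group G" and D: "subgroup D G" and img: "f ` D = carrier T"
    and mult: "\<And>x y. x \<in> D \<Longrightarrow> y \<in> D \<Longrightarrow> f (x \<otimes>\<^bsub>G\<^esub> y) = f x \<otimes>\<^bsub>T\<^esub> f y"
    and one: "f \<one>\<^bsub>G\<^esub> = \<one>\<^bsub>T\<^esub>"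
  shows "group T"
    and "x \<in> D \<Longrightarrow> inv\<^bsub>T\<^esub> (f x) = f (inv\<^bsub>G\<^esub> x)"
proof -
  interpret group G by fact
  interpret D: subgroup D G by fact
  have fD: "f x \<in> carrier T" if "x \<in> D" for x
    using img that by blast
  have ex_preimage: "\<exists>x\<in>D. t = f x" if "t \<in> carrier T" for t
    using img that by blast
  show group_T: "group T"
  proof (rule groupI)
    fix s t assume "s \<in> carrier T" "t \<in> carrier T"
    then obtain x y where "x \<in> D" "y \<in> D" "s = f x" "t = f y"
      using ex_preimage by meson
    then show "s \<otimes>\<^bsub>T\<^esub> t \<in> carrier T"
      by (simp add: mult[symmetric] fD)
  next
    show "\<one>\<^bsub>T\<^esub> \<in> carrier T" using fD[OF D.one_closed] one by simp
  next
    fix s t u assume "s \<in> carrier T" "t \<in> carrier T" "u \<in> carrier T"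
    then obtain x y z where "x \<in> D" "y \<in> D" "z \<in> D" "s = f x" "t = f y" "u = f z"
      using ex_preimage by meson
    then show "s \<otimes>\<^bsub>T\<^esub> t \<otimes>\<^bsub>T\<^esub> u = s \<otimes>\<^bsub>T\<^esub> (t \<otimes>\<^bsub>T\<^esub> u)"
      by (simp add: mult[symmetric] m_assoc D.mem_carrier)
  next
    fix t assume "t \<in> carrier T"
    then obtain x where x: "x \<in> D" "t = f x" using ex_preimage by blast
    then show "\<one>\<^bsub>T\<^esub> \<otimes>\<^bsub>T\<^esub> t = t"
      using mult[of "\<one>\<^bsub>G\<^esub>" x] one by simp
    show "\<exists>s\<in>carrier T. s \<otimes>\<^bsub>T\<^esub> t = \<one>\<^bsub>T\<^esub>"
      using x mult[of "inv\<^bsub>G\<^esub> x" x] one fD by (intro bexI[of _ "f (inv\<^bsub>G\<^esub> x)"]) auto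
  qed
  show "inv\<^bsub>T\<^esub> (f x) = f (inv\<^bsub>G\<^esub> x)" if "x \<in> D"
    using that mult[of x "inv\<^bsub>G\<^esub> x"] one fD
    by (intro group.inv_equality[OF group_T]) (auto simp flip: mult)
qed

lemma mult_lie_alg_image:
  assumes "mult_lie_alg G" and D: "mla_subalg G D" and img: "f ` D = carrier T"
    and mult: "\<And>x y. x \<in> D \<Longrightarrow> y \<in> D \<Longrightarrow> f (x \<otimes>\<^bsub>G\<^esub> y) = f x \<otimes>\<^bsub>T\<^esub> f y"
    and star: "\<And>x y. x \<in> D \<Longrightarrow> y \<in> D \<Longrightarrow> f (lstar G x y) = lstar T (f x) (f y)"
    and one: "f \<one>\<^bsub>G\<^esub> = \<one>\<^bsub>T\<^esub>"
  shows "mult_lie_alg T"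
proof -
  interpret mult_lie G by (rule mult_lie.intro) fact
  interpret D: subgroup D G using D unfolding mla_subalg_def by blast
  note group_T = group_image[OF is_group D.subgroup_axioms img mult one]
  have star_D: "lstar G x y \<in> D" if "x \<in> D" "y \<in> D" for x y
    using D that unfolding mla_subalg_def by blast
  have conjg_D: "conjg G x y \<in> D" if "x \<in> D" "y \<in> D" for x y
    using that unfolding conjg_def by simp
  have conjg_f: "conjg T (f x) (f y) = f (conjg G x y)" if "x \<in> D" "y \<in> D" for x y
    using that group_T(2) unfolding conjg_def by (simp add: mult)
  note to_G = mult[symmetric] star[symmetric] conjg_f one[symmetric] D.m_closed star_D conjg_D
  show ?thesis
    unfolding mult_lie_alg_def img[symmetric] ball_simps
    by (intro conjI group_T(1)[unfolded img[symmetric]] ballI)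
      (auto simp: to_G lstar_mult_right lstar_mult_left conjg_lstar
        mult_lie_alg[unfolded mult_lie_alg_def])
qed

lemma mla_hom_imp_group_hom:
  "group G \<Longrightarrow> group H \<Longrightarrow> f \<in> mla_hom G H \<Longrightarrow> group_hom G H f"
  unfolding mla_hom_def by (auto intro: group_hom.intro simp: group_hom_axioms_def)

lemma mla_hom_comp: "f \<in> mla_hom G H \<Longrightarrow> g \<in> mla_hom H J \<Longrightarrow> (\<lambda>x. g (f x)) \<in> mla_hom G J"
  unfolding mla_hom_def hom_def by (auto simp: Pi_def)

lemma mla_hom_lstar:
  "f \<in> mla_hom G H \<Longrightarrow> x \<in> carrier G \<Longrightarrow> y \<in> carrier G \<Longrightarrow> f (lstar G x y) = lstar H (f x) (f y)"
  unfolding mla_hom_def by blast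

lemma hom_gcomm:
  assumes "group G" "group H" "f \<in> hom G H" "x \<in> carrier G" "y \<in> carrier G"
  shows "f (gcomm G x y) = gcomm H (f x) (f y)"
proof -
  interpret group_hom G H f by (intro group_hom.intro group_hom_axioms.intro) fact+
  show ?thesis using assms(4,5) by (simp add: gcomm_def)
qed

lemma image_Collect_binop:
  assumes "\<And>a b. a \<in> A \<Longrightarrow> b \<in> B \<Longrightarrow> f (g a b) = h (f a) (f b)"
  shows "f ` {g a b | a b. a \<in> A \<and> b \<in> B} = {h a b | a b. a \<in> f ` A \<and> b \<in> f ` B}"
  using assms by force

lemma Mcomm_image:
  assumes G: "mult_lie_alg G" and H: "mult_lie_alg H" and f: "f \<in> mla_hom G H"
    and A: "A \<subseteq> carrier G" and B: "B \<subseteq> carrier G"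
  shows "f ` Mcomm G A B = Mcomm H (f ` A) (f ` B)"
proof -
  interpret G: mult_lie G by (rule mult_lie.intro) fact
  interpret H: mult_lie H by (rule mult_lie.intro) fact
  interpret group_hom G H f by (rule mla_hom_imp_group_hom) (fact G.is_group H.is_group f)+
  have gcomm: "f (gcomm G x y) = gcomm H (f x) (f y)" if "x \<in> carrier G" "y \<in> carrier G" for x y
    using G.is_group H.is_group f that by (simp add: hom_gcomm mla_hom_def)
  have gens: "{lstar G a b | a b. a \<in> A \<and> b \<in> B} \<union> {gcomm G a b | a b. a \<in> A \<and> b \<in> B} \<subseteq> carrier G"
    using A B by auto
  have "f ` {lstar G a b | a b. a \<in> A \<and> b \<in> B} = {lstar H a b | a b. a \<in> f ` A \<and> b \<in> f ` B}"
    using A B by (intro image_Collect_binop mla_hom_lstar[OF f]) auto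
  moreover have "f ` {gcomm G a b | a b. a \<in> A \<and> b \<in> B} = {gcomm H a b | a b. a \<in> f ` A \<and> b \<in> f ` B}"
    using A B by (intro image_Collect_binop gcomm) auto
  ultimately show ?thesis
    unfolding Mcomm_def generate_img[OF gens, symmetric] image_Un by simp
qed

context mult_lie
begin

abbreviation quot_center :: "'a set mul_lie" where
  "quot_center \<equiv> quot_mla G (mla_center G)"

lemma carrier_quot_center: "carrier quot_center = rcosets (mla_center G)"
  and one_quot_center: "\<one>\<^bsub>quot_center\<^esub> = mla_center G"
  by (simp_all add: quot_mla_def)

lemma mult_quot_center:
  "x \<in> carrier G \<Longrightarrow> y \<in> carrier G \<Longrightarrow>
    (mla_center G #> x) \<otimes>\<^bsub>quot_center\<^esub> (mla_center G #> y) = mla_center G #> (x \<otimes> y)"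
  by (simp add: quot_mla_def normal.rcos_sum[OF normal_mla_center])

lemma lstar_quot_center:
  assumes x: "x \<in> carrier G" and y: "y \<in> carrier G"
  shows "lstar quot_center (mla_center G #> x) (mla_center G #> y) = mla_center G #> lstar G x y"
proof -
  have some_rcos: "(SOME u. u \<in> mla_center G #> a) \<in> mla_center G #> a" if "a \<in> carrier G" for a
    using rcos_self[OF that subgroup_mla_center] by (rule someI)
  obtain z where z: "z \<in> mla_center G" "(SOME u. u \<in> mla_center G #> x) = z \<otimes> x"
    using some_rcos[OF x] unfolding r_coset_def by blast
  obtain w where w: "w \<in> mla_center G" "(SOME u. u \<in> mla_center G #> y) = w \<otimes> y"
    using some_rcos[OF y] unfolding r_coset_def by blast
  show ?thesis
    using z w x y by (simp add: quot_mla_def lstar_mult_center)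
qed

lemma image_proj_center: "(\<lambda>x. mla_center G #> x) ` carrier G = carrier quot_center"
  by (auto simp: carrier_quot_center RCOSETS_def)

lemma mult_lie_alg_quot_center: "mult_lie_alg quot_center"
  by (rule mult_lie_alg_image[OF mult_lie_alg mla_subalg_carrier image_proj_center])
    (simp_all add: mult_quot_center lstar_quot_center one_quot_center coset_mult_one mla_center_closed subsetI)

lemma proj_center_mla_hom: "(\<lambda>x. mla_center G #> x) \<in> mla_hom G quot_center"
  using image_proj_center
  by (auto simp: mla_hom_def hom_def mult_quot_center lstar_quot_center)

lemma subgroup_Mcomm: "A \<subseteq> carrier G \<Longrightarrow> B \<subseteq> carrier G \<Longrightarrow> subgroup (Mcomm G A B) G"
  unfolding Mcomm_def by (rule generate_is_subgroup) auto

lemma Mcomm_center_cover: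
  assumes A: "A \<subseteq> carrier G" and cover: "carrier G \<subseteq> mla_center G <#> A"
  shows "Mcomm G A A = Mcomm G (carrier G) (carrier G)"
proof -
  have lift: "{f a b | a b. a \<in> A \<and> b \<in> A} = {f a b | a b. a \<in> carrier G \<and> b \<in> carrier G}"
    if f: "\<And>z w x y. z \<in> mla_center G \<Longrightarrow> w \<in> mla_center G \<Longrightarrow> x \<in> carrier G \<Longrightarrow>
      y \<in> carrier G \<Longrightarrow> f (z \<otimes> x) (w \<otimes> y) = f x y" for f
  proof
    show "{f a b | a b. a \<in> carrier G \<and> b \<in> carrier G} \<subseteq> {f a b | a b. a \<in> A \<and> b \<in> A}"
    proof clarify
      have decomp: "\<exists>z\<in>mla_center G. \<exists>a'\<in>A. a = z \<otimes> a'" if "a \<in> carrier G" for a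
        using cover that unfolding set_mult_def by blast
      fix a b assume "a \<in> carrier G" "b \<in> carrier G"
      then obtain z w a' b' where "z \<in> mla_center G" "w \<in> mla_center G" "a' \<in> A" "b' \<in> A"
        "a = z \<otimes> a'" "b = w \<otimes> b'"
        using decomp by meson
      then show "\<exists>a' b'. f a b = f a' b' \<and> a' \<in> A \<and> b' \<in> A"
        using f A by blast
    qed
  qed (use A in blast)
  show ?thesis
    unfolding Mcomm_def
    by (simp only: lift[of "lstar G", OF lstar_mult_center] lift[of "gcomm G", OF gcomm_mult_center])
qed

lemma gcomm_center_left: "z \<in> mla_center G \<Longrightarrow> y \<in> carrier G \<Longrightarrow> gcomm G z y = \<one>"
  unfolding gcomm_def by (simp add: center_commute mla_center_closed m_assoc)

lemma Mcomm_subset_kernel: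
  assumes F: "mult_lie_alg F" and \<phi>: "\<phi> \<in> mla_hom F G"
    and R: "R \<subseteq> carrier F" "\<phi> ` R \<subseteq> mla_center G"
  shows "Mcomm F R (carrier F) \<subseteq> kernel F G \<phi>"
proof -
  interpret F: mult_lie F by (rule mult_lie.intro) fact
  interpret group_hom F G \<phi> by (rule mla_hom_imp_group_hom) (fact F.is_group is_group \<phi>)+
  have "\<phi> (lstar F r b) = \<one> \<and> \<phi> (gcomm F r b) = \<one>" if r: "r \<in> R" and b: "b \<in> carrier F" for r b
  proof -
    have "\<phi> r \<in> mla_center G" "r \<in> carrier F" using r R by auto
    moreover have hom: "\<phi> \<in> hom F G" using \<phi> by (simp add: mla_hom_def)
    ultimately
    show ?thesis
      using b mla_hom_lstar[OF \<phi>] hom_gcomm[OF F.is_group is_group hom]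
      by (simp add: gcomm_center_left)
  qed
  then show ?thesis
    unfolding Mcomm_def using R(1)
    by (intro F.generate_subgroup_incl subgroup_kernel) (auto simp: kernel_def)
qed

lemma Mcomm_quot_center:
  "(\<lambda>x. mla_center G #> x) ` Mcomm G (carrier G) (carrier G)
    = Mcomm quot_center (carrier quot_center) (carrier quot_center)"
  using Mcomm_image[OF mult_lie_alg mult_lie_alg_quot_center proj_center_mla_hom]
  by (simp add: image_proj_center)

end

section \<open>Lifting along free multiplicative Lie algebras\<close>

definition transport_mla :: "'b mul_lie \<Rightarrow> 'b set \<Rightarrow> ('b \<Rightarrow> 'a) \<Rightarrow> 'a mul_lie" where
  "transport_mla G D j = \<lparr>carrier = j ` D,
     monoid.mult = (\<lambda>x y. j (inv_into D j x \<otimes>\<^bsub>G\<^esub> inv_into D j y)), one = j \<one>\<^bsub>G\<^esub>,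
     lstar = (\<lambda>x y. j (lstar G (inv_into D j x) (inv_into D j y)))\<rparr>"

lemma mult_lie_alg_transport:
  assumes "mult_lie_alg G" "mla_subalg G D" "inj_on j D"
  shows "mult_lie_alg (transport_mla G D j)"
  using assms by (intro mult_lie_alg_image[of G D j]) (simp_all add: transport_mla_def)

lemma transport_mla_hom:
  assumes h: "h \<in> mla_hom F G" and D: "h ` carrier F \<subseteq> D" and j: "inj_on j D"
  shows "(\<lambda>x. j (h x)) \<in> mla_hom F (transport_mla G D j)"
proof -
  have "inv_into D j (j (h x)) = h x" if "x \<in> carrier F" for x
    using that D j by auto
  then show ?thesis
    using h D unfolding mla_hom_def hom_def transport_mla_def by auto
qed

lemma transport_mla_hom_inv:
  assumes h: "h \<in> mla_hom F (transport_mla G D j)" and D: "mla_subalg G D" and j: "inj_on j D"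
  shows "(\<lambda>x. inv_into D j (h x)) \<in> mla_hom F G"
proof -
  have closed: "x \<otimes>\<^bsub>G\<^esub> y \<in> D" "lstar G x y \<in> D" if "x \<in> D" "y \<in> D" for x y
    using D that unfolding mla_subalg_def by (auto intro: subgroup.m_closed)
  have "D \<subseteq> carrier G"
    using D unfolding mla_subalg_def by (auto dest: subgroup.subset)
  have hD: "inv_into D j (h x) \<in> D" if "x \<in> carrier F" for x
  proof -
    have "h x \<in> j ` D"
      using h that unfolding mla_hom_def hom_def transport_mla_def by auto
    then show ?thesis by (rule inv_into_into)
  qed
  show ?thesis
    using h hD \<open>D \<subseteq> carrier G\<close> j closed unfolding mla_hom_def hom_def
    by (auto simp: transport_mla_def)
qed

lemma free_mla_imp_mult_lie_alg: "free_mla F B \<Longrightarrow> mult_lie_alg F"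
  and free_mla_generators: "free_mla F B \<Longrightarrow> B \<subseteq> carrier F"
  unfolding free_mla_def by simp_all

lemma free_mla_extend:
  fixes F T :: "'a mul_lie"
  assumes "free_mla F B" "mult_lie_alg T" "\<forall>b\<in>B. f b \<in> carrier T"
  shows "\<exists>h\<in>mla_hom F T. \<forall>b\<in>B. h b = f b"
  using assms unfolding free_mla_def by blast

lemma free_mla_unique:
  fixes F T :: "'a mul_lie"
  assumes free: "free_mla F B" and T: "mult_lie_alg T"
    and "h1 \<in> mla_hom F T" "h2 \<in> mla_hom F T" "\<forall>b\<in>B. h1 b = h2 b" "x \<in> carrier F"
  shows "h1 x = h2 x"
proof -
  have "\<forall>b\<in>B. h1 b \<in> carrier T"
    using assms free_mla_generators[OF free] unfolding mla_hom_def hom_def by auto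
  then show ?thesis
    using free T assms(3-) unfolding free_mla_def by blast
qed

lemma free_mla_extend_embedded:
  fixes F :: "'a mul_lie" and G :: "'b mul_lie" and j :: "'b \<Rightarrow> 'a"
  assumes free: "free_mla F B" and G: "mult_lie_alg G" and D: "mla_subalg G D"
    and j: "inj_on j D" and l: "l ` B \<subseteq> D"
  shows "\<exists>\<phi>\<in>mla_hom F G. \<forall>b\<in>B. \<phi> b = l b"
proof -
  have "mult_lie_alg (transport_mla G D j)"
    using G D j by (rule mult_lie_alg_transport)
  moreover have "\<forall>b\<in>B. j (l b) \<in> carrier (transport_mla G D j)"
    using l by (auto simp: transport_mla_def)
  ultimately obtain h where h: "h \<in> mla_hom F (transport_mla G D j)" "\<forall>b\<in>B. h b = j (l b)"
    using free_mla_extend[OF free, of _ "\<lambda>b. j (l b)"] by blast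
  show ?thesis
  proof (intro bexI ballI)
    show "(\<lambda>x. inv_into D j (h x)) \<in> mla_hom F G"
      using h(1) D j by (rule transport_mla_hom_inv)
    show "inv_into D j (h b) = l b" if "b \<in> B" for b
      using h(2) l j that by auto
  qed
qed

lemma free_mla_unique_embedded:
  fixes F :: "'a mul_lie" and G :: "'b mul_lie" and j :: "'b \<Rightarrow> 'a"
  assumes free: "free_mla F B" and G: "mult_lie_alg G" and j: "inj_on j (carrier G)"
    and h1: "h1 \<in> mla_hom F G" and h2: "h2 \<in> mla_hom F G" and eq: "\<forall>b\<in>B. h1 b = h2 b"
    and x: "x \<in> carrier F"
  shows "h1 x = h2 x"
proof -
  interpret mult_lie G by (rule mult_lie.intro) fact
  let ?T = "transport_mla G (carrier G) j"
  have hom: "(\<lambda>x. j (h x)) \<in> mla_hom F ?T" if h: "h \<in> mla_hom F G" for h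
  proof (rule transport_mla_hom[OF h _ j])
    show "h ` carrier F \<subseteq> carrier G" using h by (auto simp: mla_hom_def hom_def)
  qed
  have "mult_lie_alg ?T"
    using mult_lie_alg mla_subalg_carrier j by (rule mult_lie_alg_transport)
  then have "j (h1 x) = j (h2 x)"
    using free_mla_unique[OF free _ hom[OF h1] hom[OF h2] _ x] eq by simp
  then show ?thesis
    using j h1 h2 x unfolding mla_hom_def hom_def by (auto dest: inj_onD)
qed

datatype 'x mla_term = Gen 'x | Unit | Mult "'x mla_term" "'x mla_term"
  | Inv "'x mla_term" | Star "'x mla_term" "'x mla_term"

primrec eval_term :: "'a mul_lie \<Rightarrow> ('x \<Rightarrow> 'a) \<Rightarrow> 'x mla_term \<Rightarrow> 'a" where
  "eval_term G l (Gen x) = l x"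
| "eval_term G l Unit = \<one>\<^bsub>G\<^esub>"
| "eval_term G l (Mult s t) = eval_term G l s \<otimes>\<^bsub>G\<^esub> eval_term G l t"
| "eval_term G l (Inv s) = inv\<^bsub>G\<^esub> (eval_term G l s)"
| "eval_term G l (Star s t) = lstar G (eval_term G l s) (eval_term G l t)"

lemma (in mult_lie) eval_term_closed: "(\<And>x. l x \<in> carrier G) \<Longrightarrow> eval_term G l t \<in> carrier G"
  by (induction t) auto

lemma (in mult_lie) mla_subalg_range_eval_term:
  assumes "\<And>x. l x \<in> carrier G"
  shows "mla_subalg G (range (eval_term G l))"
  unfolding mla_subalg_def
proof (intro conjI ballI subgroupI)
  show "range (eval_term G l) \<subseteq> carrier G" using eval_term_closed assms by blast
  show "range (eval_term G l) \<noteq> {}" by blast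
  fix x y assume "x \<in> range (eval_term G l)" "y \<in> range (eval_term G l)"
  then obtain s t where "x = eval_term G l s" "y = eval_term G l t" by blast
  then show "inv x \<in> range (eval_term G l)" "x \<otimes> y \<in> range (eval_term G l)"
    "lstar G x y \<in> range (eval_term G l)"
    by (metis eval_term.simps(4) rangeI, metis eval_term.simps(3) rangeI,
        metis eval_term.simps(5) rangeI)
qed

primrec encode_term :: "('a \<times> 'a \<Rightarrow> 'a) \<Rightarrow> (nat \<Rightarrow> 'a) \<Rightarrow> 'a mla_term \<Rightarrow> 'a" where
  "encode_term p n (Gen x) = p (n 0, x)"
| "encode_term p n Unit = p (n 1, n 0)"
| "encode_term p n (Mult s t) = p (n 2, p (encode_term p n s, encode_term p n t))"
| "encode_term p n (Inv s) = p (n 3, encode_term p n s)"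
| "encode_term p n (Star s t) = p (n 4, p (encode_term p n s, encode_term p n t))"

lemma inj_encode_term:
  assumes p: "inj p" and n: "inj n"
  shows "inj (encode_term p n)"
proof -
  have "encode_term p n s = encode_term p n t \<Longrightarrow> s = t" for s t
    by (induction s arbitrary: t; case_tac t) (simp_all add: inj_eq[OF p] inj_eq[OF n])
  then show ?thesis by (rule injI)
qed

lemma inj_mla_term_infinite:
  assumes "infinite (UNIV :: 'a set)"
  shows "\<exists>e :: 'a mla_term \<Rightarrow> 'a. inj e"
proof -
  obtain n :: "nat \<Rightarrow> 'a" where n: "inj n"
    using assms infinite_countable_subset by blast
  have "|UNIV \<times> UNIV :: ('a \<times> 'a) set| \<le>o |UNIV :: 'a set|"
    using card_of_Times_same_infinite[OF assms] ordIso_iff_ordLeq by blast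
  then obtain p :: "'a \<times> 'a \<Rightarrow> 'a" where "inj p"
    unfolding card_of_ordLeq[symmetric] UNIV_Times_UNIV by blast
  then show ?thesis using inj_encode_term n by blast
qed

lemma free_mla_extend_infinite:
  fixes F :: "'a mul_lie" and K :: "'k mul_lie"
  assumes free: "free_mla F B" and K: "mult_lie_alg K" and inf: "infinite (UNIV :: 'a set)"
    and l: "l ` B \<subseteq> carrier K"
  shows "\<exists>\<phi>\<in>mla_hom F K. \<forall>b\<in>B. \<phi> b = l b"
proof -
  interpret mult_lie K by (rule mult_lie.intro) fact
  define l' where "l' x = (if x \<in> B then l x else \<one>\<^bsub>K\<^esub>)" for x
  have l'_closed: "l' x \<in> carrier K" for x
    using l by (auto simp: l'_def)
  obtain e :: "'a mla_term \<Rightarrow> 'a" where e: "inj e"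
    using inj_mla_term_infinite[OF inf] by blast
  let ?D = "range (eval_term K l')"
  have D: "mla_subalg K ?D"
    using mla_subalg_range_eval_term l'_closed by blast
  have "inj_on (inv_into UNIV (eval_term K l')) ?D"
    by (rule inj_on_inv_into) simp
  then have j: "inj_on (e \<circ> inv_into UNIV (eval_term K l')) ?D"
    using inj_on_subset[OF e subset_UNIV] by (rule comp_inj_on)
  have "l' ` B \<subseteq> ?D"
    using eval_term.simps(1)[of K l'] by (metis image_subsetI rangeI)
  then obtain \<phi> where "\<phi> \<in> mla_hom F K" "\<forall>b\<in>B. \<phi> b = l' b"
    using free_mla_extend_embedded[OF free K D j] by blast
  then show ?thesis by (auto simp: l'_def)
qed

definition trivial_lstar :: "'a monoid \<Rightarrow> 'a mul_lie" where
  "trivial_lstar G = \<lparr>carrier = carrier G, monoid.mult = monoid.mult G, one = \<one>\<^bsub>G\<^esub>,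
     lstar = (\<lambda>_ _. \<one>\<^bsub>G\<^esub>)\<rparr>"

lemma mult_lie_alg_trivial_lstar:
  assumes "group G"
  shows "mult_lie_alg (trivial_lstar G)"
proof -
  let ?T = "trivial_lstar G"
  have "group ?T"
    using assms unfolding trivial_lstar_def group_def group_axioms_def monoid_def Units_def
    by simp
  then interpret T: group ?T .
  have "lstar ?T x y = \<one>\<^bsub>?T\<^esub>" for x y
    by (simp add: trivial_lstar_def)
  then show ?thesis
    unfolding mult_lie_alg_def by (simp add: conjg_def T.is_group)
qed

context mult_lie
begin

lemma lstar_pow_pow: "c \<in> carrier G \<Longrightarrow> lstar G (c [^] (i::nat)) (c [^] (j::nat)) = \<one>"
proof (induction j)
  case (Suc j)
  have "lstar G (c [^] i) c = \<one>"
    using Suc.prems by (induction i) (simp_all add: lstar_mult_left)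
  then show ?case
    using Suc by (simp add: lstar_mult_right)
qed simp

lemma central_if_cyclic_mod_center:
  assumes c: "c \<in> carrier G" and cover: "carrier G \<subseteq> (\<Union>k::nat. mla_center G #> c [^] k)"
  shows "carrier G \<subseteq> mla_center G"
proof
  have split: "\<exists>z k. z \<in> mla_center G \<and> a = z \<otimes> c [^] (k::nat)" if "a \<in> carrier G" for a
    using cover that unfolding r_coset_def by blast
  fix a assume a: "a \<in> carrier G"
  obtain z k where z: "z \<in> mla_center G" and a_eq: "a = z \<otimes> c [^] (k::nat)"
    using split[OF a] by blast
  have "lstar G a y = \<one> \<and> a \<otimes> y = y \<otimes> a" if y: "y \<in> carrier G" for y
  proof -
    obtain w i where w: "w \<in> mla_center G" and y_eq: "y = w \<otimes> c [^] (i::nat)"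
      using split[OF y] by blast
    have zG: "z \<in> carrier G" and wG: "w \<in> carrier G"
      using z w by (simp_all add: mla_center_closed)
    have "lstar G a y = \<one>"
      using a_eq y_eq z w c by (simp add: lstar_mult_center lstar_pow_pow)
    moreover have "a \<otimes> y = z \<otimes> (w \<otimes> (c [^] k \<otimes> c [^] i))"
      using a_eq y_eq zG wG c by (simp add: m_assoc center_left_commute[OF w])
    moreover have "y \<otimes> a = z \<otimes> (w \<otimes> (c [^] k \<otimes> c [^] i))"
      using a_eq y_eq zG wG c by (simp add: m_assoc center_left_commute[OF z] nat_pow_mult add.commute)
    ultimately show ?thesis by simp
  qed
  then show "a \<in> mla_center G"
    using a unfolding mla_center_def lie_center_def grp_center_def by blast
qed

end

lemma free_mla_no_generators:
  fixes F :: "'a mul_lie"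
  assumes "free_mla F {}"
  shows "carrier F = {\<one>\<^bsub>F\<^esub>}"
proof -
  interpret mult_lie F by (rule mult_lie.intro, rule free_mla_imp_mult_lie_alg) fact
  have "(\<lambda>x. x) \<in> mla_hom F F" "(\<lambda>x. \<one>\<^bsub>F\<^esub>) \<in> mla_hom F F"
    by (auto simp: mla_hom_def hom_def)
  then show ?thesis
    using free_mla_unique[OF assms mult_lie_alg] by blast
qed

text \<open>Mapping the generator \<open>b\<close> to \<open>1\<close> in the cyclic group of order \<open>card UNIV\<close>,
  viewed as a multiplicative Lie algebra with trivial product, shows that the first
  \<open>card UNIV\<close> powers of \<open>b\<close> are distinct.\<close>

lemma free_mla_finite_powers_generator:
  fixes F :: "'a mul_lie"
  assumes free: "free_mla F B" and fin: "finite (UNIV :: 'a set)"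
    and b: "b \<in> B" and two: "card (UNIV :: 'a set) \<ge> 2"
  shows "(\<lambda>k. b [^]\<^bsub>F\<^esub> k) ` {..<card (UNIV :: 'a set)} = UNIV"
proof -
  interpret mult_lie F by (rule mult_lie.intro, rule free_mla_imp_mult_lie_alg) fact
  define N where "N = card (UNIV :: 'a set)"
  have bF: "b \<in> carrier F" using b free_mla_generators[OF free] by blast
  let ?T = "trivial_lstar (integer_mod_group N)"
  interpret T: mult_lie ?T
    by (rule mult_lie.intro, rule mult_lie_alg_trivial_lstar, rule group_integer_mod_group)
  have T: "carrier ?T = {0..<int N}"
    using two by (simp add: trivial_lstar_def carrier_integer_mod_group N_def)
  obtain j :: "int \<Rightarrow> 'a" where j: "inj_on j (carrier ?T)"
    using card_le_inj[OF _ fin, of "carrier ?T"] T by (auto simp: N_def)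
  have "(\<lambda>_. 1) ` B \<subseteq> carrier ?T"
    unfolding T using two by (simp add: image_subset_iff N_def)
  then obtain h where h: "h \<in> mla_hom F ?T" and hb: "h b = 1"
    using free_mla_extend_embedded[OF free T.mult_lie_alg T.mla_subalg_carrier j] b by blast
  have "h (b [^]\<^bsub>F\<^esub> k) = int k mod int N" for k :: nat
  proof -
    have "h \<in> hom F ?T" using h by (simp add: mla_hom_def)
    then have "h (b [^]\<^bsub>F\<^esub> k) = 1 [^]\<^bsub>?T\<^esub> k"
      using hom_nat_pow[OF _ bF is_group T.is_group, of h k] hb by simp
    also have "\<dots> = 1 [^]\<^bsub>integer_mod_group N\<^esub> k" by (simp add: trivial_lstar_def nat_pow_def)
    finally show ?thesis by simp
  qed
  then have "inj_on (\<lambda>k. b [^]\<^bsub>F\<^esub> k) {..<N}"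
    by (intro inj_onI) (metis lessThan_iff mod_pos_pos_trivial of_nat_0_le_iff of_nat_eq_iff of_nat_less_iff)
  then have "card ((\<lambda>k. b [^]\<^bsub>F\<^esub> k) ` {..<N}) = card (UNIV :: 'a set)"
    by (simp add: card_image N_def)
  then show ?thesis
    using fin by (simp add: card_subset_eq N_def)
qed

lemma free_mla_finite_cyclic:
  fixes F :: "'a mul_lie"
  assumes free: "free_mla F B" and fin: "finite (UNIV :: 'a set)"
  shows "\<exists>c\<in>carrier F. carrier F \<subseteq> range (\<lambda>k::nat. c [^]\<^bsub>F\<^esub> k)"
proof (cases "\<exists>b\<in>B. card (UNIV :: 'a set) \<ge> 2")
  case True
  then obtain b where "b \<in> B" "card (UNIV :: 'a set) \<ge> 2" by blast
  then show ?thesis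
    using free_mla_finite_powers_generator[OF free fin] free_mla_generators[OF free] by blast
next
  case False
  have "carrier F = {\<one>\<^bsub>F\<^esub>}"
  proof (cases "B = {}")
    case True
    then show ?thesis using free free_mla_no_generators by blast
  next
    case False
    then have "card (UNIV :: 'a set) = 1"
      using \<open>\<not> (\<exists>b\<in>B. _)\<close> finite_UNIV_card_ge_0[OF fin] by fastforce
    then obtain u :: 'a where "UNIV = {u}"
      by (auto simp: card_1_singleton_iff)
    then have "x = y" for x y :: 'a
      by (metis UNIV_I singletonD)
    moreover have "\<one>\<^bsub>F\<^esub> \<in> carrier F"
      using free_mla_imp_mult_lie_alg[OF free] by (simp add: mult_lie_alg_def group.is_monoid)
    ultimately show ?thesis by blast
  qed
  then show ?thesis
    using rangeI[of "\<lambda>k::nat. \<one>\<^bsub>F\<^esub> [^]\<^bsub>F\<^esub> k" 0] by auto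
qed

context mult_lie
begin

lemma free_mla_lift_infinite:
  fixes F :: "'b mul_lie"
  assumes free: "free_mla F B" and inf: "infinite (UNIV :: 'b set)"
    and \<pi>: "\<pi> \<in> mla_hom F quot_center" and surj: "\<pi> ` carrier F = carrier quot_center"
  shows "\<exists>\<phi>\<in>mla_hom F G. \<forall>x\<in>carrier F. mla_center G #> \<phi> x = \<pi> x"
proof -
  define l where "l b = (SOME a. a \<in> \<pi> b)" for b
  have l: "l b \<in> carrier G \<and> mla_center G #> l b = \<pi> b" if b: "b \<in> carrier F" for b
  proof -
    have "\<pi> b \<in> rcosets (mla_center G)"
      using surj b by (auto simp: carrier_quot_center)
    then obtain a where a: "a \<in> carrier G" "\<pi> b = mla_center G #> a"
      unfolding RCOSETS_def by blast
    then have "l b \<in> mla_center G #> a"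
      unfolding l_def using rcos_self[OF a(1) subgroup_mla_center] by (metis someI)
    then show ?thesis
      using a repr_independence[OF _ a(1) subgroup_mla_center] r_coset_subset_G[OF _ a(1)]
        mla_center_closed by blast
  qed
  then have "l ` B \<subseteq> carrier G"
    using free_mla_generators[OF free] by blast
  then obtain \<phi> where \<phi>: "\<phi> \<in> mla_hom F G" and \<phi>_B: "\<forall>b\<in>B. \<phi> b = l b"
    using free_mla_extend_infinite[OF free mult_lie_alg inf] by blast
  \<comment> \<open>a section of \<open>\<pi>\<close> embeds \<open>quot_center\<close> into the element type of \<open>F\<close>\<close>
  have "inj_on (inv_into (carrier F) \<pi>) (carrier quot_center)"
    using surj by (simp add: inj_on_inv_into)
  then have "\<pi> x = mla_center G #> \<phi> x" if "x \<in> carrier F" for x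
    using free_mla_unique_embedded[OF free mult_lie_alg_quot_center _ \<pi>
        mla_hom_comp[OF \<phi> proj_center_mla_hom] _ that]
      \<phi>_B l free_mla_generators[OF free] by auto
  with \<phi> show ?thesis by auto
qed

lemma central_if_finite_free_presentation:
  fixes F :: "'b mul_lie"
  assumes free: "free_mla F B" and fin: "finite (UNIV :: 'b set)"
    and \<pi>: "\<pi> \<in> mla_hom F quot_center" and surj: "\<pi> ` carrier F = carrier quot_center"
  shows "carrier G \<subseteq> mla_center G"
proof -
  have F: "mult_lie_alg F" using free by (rule free_mla_imp_mult_lie_alg)
  obtain c where c: "c \<in> carrier F" and cyclic: "carrier F \<subseteq> range (\<lambda>k::nat. c [^]\<^bsub>F\<^esub> k)"
    using free_mla_finite_cyclic[OF free fin] by blast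
  have "\<pi> c \<in> rcosets (mla_center G)"
    using surj c by (auto simp: carrier_quot_center)
  then obtain a where a: "a \<in> carrier G" "\<pi> c = mla_center G #> a"
    unfolding RCOSETS_def by blast
  have "carrier G \<subseteq> (\<Union>k::nat. mla_center G #> a [^] k)"
  proof
    fix y assume y: "y \<in> carrier G"
    then obtain x where x: "x \<in> carrier F" "mla_center G #> y = \<pi> x"
      using surj image_proj_center by (metis imageE image_eqI)
    moreover obtain k :: nat where "x = c [^]\<^bsub>F\<^esub> k"
      using cyclic x(1) by blast
    ultimately have "mla_center G #> y = \<pi> (c [^]\<^bsub>F\<^esub> k)" by simp
    also have "\<dots> = mla_center G #> a [^] k"
      using hom_nat_pow[of \<pi> F quot_center c k] hom_nat_pow[of "\<lambda>x. mla_center G #> x" G quot_center a k]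
        \<pi> proj_center_mla_hom c a F mult_lie_alg_quot_center
      by (simp add: mla_hom_def mult_lie_alg_def)
    finally have "y \<in> mla_center G #> a [^] k"
      using rcos_self[OF y subgroup_mla_center] by simp
    then show "y \<in> (\<Union>k::nat. mla_center G #> a [^] k)" by blast
  qed
  then show ?thesis
    by (rule central_if_cyclic_mod_center[OF a(1)])
qed

lemma free_mla_lift_quot_center:
  fixes F :: "'b mul_lie"
  assumes free: "free_mla F B" and \<pi>: "\<pi> \<in> mla_hom F quot_center"
    and surj: "\<pi> ` carrier F = carrier quot_center"
  shows "\<exists>\<phi>\<in>mla_hom F G. \<forall>x\<in>carrier F. mla_center G #> \<phi> x = \<pi> x"
proof (cases "finite (UNIV :: 'b set)")
  case True
  then have central: "carrier G \<subseteq> mla_center G"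
    using central_if_finite_free_presentation[OF free _ \<pi> surj] by blast
  have "\<pi> x = mla_center G #> \<one>" if x: "x \<in> carrier F" for x
  proof -
    have "\<pi> x \<in> rcosets (mla_center G)"
      using surj x by (auto simp: carrier_quot_center)
    then obtain a where "a \<in> carrier G" "\<pi> x = mla_center G #> a"
      unfolding RCOSETS_def by blast
    then show ?thesis
      using central coset_join2[OF _ subgroup_mla_center] by (auto simp: subset_iff)
  qed
  moreover have "(\<lambda>_. \<one>) \<in> mla_hom F G"
    by (simp add: mla_hom_def hom_def)
  ultimately show ?thesis by auto
qed (use free_mla_lift_infinite[OF free _ \<pi> surj] in blast)

end

section \<open>The map from the Schur multiplier\<close>

lemma hom_Mod_induced:
  assumes F: "group F" and K: "group K" and \<phi>: "\<phi> \<in> hom F K"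
    and H: "subgroup H F" "H \<subseteq> kernel F K \<phi>"
    and N: "N \<subseteq> carrier F" and S: "\<phi> ` N \<subseteq> S"
  shows "(\<lambda>C. \<phi> (SOME x. x \<in> C)) \<in> hom ((F\<lparr>carrier := N\<rparr>) Mod H) (K\<lparr>carrier := S\<rparr>)"
    and "(\<lambda>C. \<phi> (SOME x. x \<in> C)) ` carrier ((F\<lparr>carrier := N\<rparr>) Mod H) = \<phi> ` N"
proof -
  interpret group_hom F K \<phi> by (intro group_hom.intro group_hom_axioms.intro) fact+
  have H_one: "\<phi> h = \<one>\<^bsub>K\<^esub>" if "h \<in> H" for h
    using H(2) that by (auto simp: kernel_def)
  have carrier: "carrier ((F\<lparr>carrier := N\<rparr>) Mod H) = (\<lambda>x. H #>\<^bsub>F\<^esub> x) ` N"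
    by (auto simp: FactGroup_def RCOSETS_def r_coset_def)
  have mult: "U \<otimes>\<^bsub>(F\<lparr>carrier := N\<rparr>) Mod H\<^esub> V = U <#>\<^bsub>F\<^esub> V" for U V
    by (simp add: FactGroup_def set_mult_def)
  have some: "\<phi> (SOME x. x \<in> C) = v" if "u \<in> C" "\<forall>x\<in>C. \<phi> x = v" for C v u
    using that by (metis someI)
  have \<phi>_coset: "\<phi> y = \<phi> x" if "x \<in> carrier F" "y \<in> H #>\<^bsub>F\<^esub> x" for x y
    using that H_one subgroup.subset[OF H(1)] by (auto simp: r_coset_def)
  have \<phi>_product: "\<phi> u = \<phi> x \<otimes>\<^bsub>K\<^esub> \<phi> y"
    if x: "x \<in> carrier F" and y: "y \<in> carrier F"
      and u: "u \<in> (H #>\<^bsub>F\<^esub> x) <#>\<^bsub>F\<^esub> (H #>\<^bsub>F\<^esub> y)" for x y u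
  proof -
    obtain h h' where "h \<in> H" "h' \<in> H" "u = (h \<otimes>\<^bsub>F\<^esub> x) \<otimes>\<^bsub>F\<^esub> (h' \<otimes>\<^bsub>F\<^esub> y)"
      using u unfolding set_mult_def r_coset_def by blast
    then show ?thesis using x y H_one subgroup.mem_carrier[OF H(1)] by simp
  qed
  have induced: "\<phi> (SOME u. u \<in> H #>\<^bsub>F\<^esub> x) = \<phi> x" if "x \<in> carrier F" for x
    using some[OF group.rcos_self[OF F that H(1)]] \<phi>_coset[OF that] by blast
  show "(\<lambda>C. \<phi> (SOME x. x \<in> C)) ` carrier ((F\<lparr>carrier := N\<rparr>) Mod H) = \<phi> ` N"
    unfolding carrier image_image by (rule image_cong[OF refl]) (use induced N in auto)
  have "\<phi> (SOME u. u \<in> (H #>\<^bsub>F\<^esub> x) <#>\<^bsub>F\<^esub> (H #>\<^bsub>F\<^esub> y)) = \<phi> x \<otimes>\<^bsub>K\<^esub> \<phi> y"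
    if "x \<in> carrier F" "y \<in> carrier F" for x y
  proof (rule some)
    show "x \<otimes>\<^bsub>F\<^esub> y \<in> (H #>\<^bsub>F\<^esub> x) <#>\<^bsub>F\<^esub> (H #>\<^bsub>F\<^esub> y)"
      using that group.rcos_self[OF F _ H(1)] by (auto simp: set_mult_def)
  qed (use that \<phi>_product in blast)
  then show "(\<lambda>C. \<phi> (SOME x. x \<in> C)) \<in> hom ((F\<lparr>carrier := N\<rparr>) Mod H) (K\<lparr>carrier := S\<rparr>)"
    using N S induced unfolding hom_def carrier mult by (auto simp: subsetD)
qed

context mult_lie
begin

lemma Mcomm_image_of_lift:
  assumes F: "mult_lie_alg F" and \<phi>: "\<phi> \<in> mla_hom F G"
    and onto: "(\<lambda>x. mla_center G #> \<phi> x) ` carrier F = carrier quot_center"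
  shows "\<phi> ` Mcomm F (carrier F) (carrier F) = Mcomm G (carrier G) (carrier G)"
proof -
  have \<phi>_closed: "\<phi> ` carrier F \<subseteq> carrier G"
    using \<phi> by (auto simp: mla_hom_def hom_def)
  have "carrier G \<subseteq> mla_center G <#> \<phi> ` carrier F"
  proof
    fix a assume a: "a \<in> carrier G"
    then have "mla_center G #> a \<in> carrier quot_center"
      using image_proj_center by blast
    then obtain x where x: "x \<in> carrier F" "mla_center G #> a = mla_center G #> \<phi> x"
      unfolding onto[symmetric] by blast
    then have "a \<in> mla_center G #> \<phi> x"
      using rcos_self[OF a subgroup_mla_center] by simp
    then show "a \<in> mla_center G <#> \<phi> ` carrier F"
      using x(1) unfolding r_coset_def set_mult_def by blast
  qed
  then show ?thesis
    unfolding Mcomm_image[OF F mult_lie_alg \<phi> subset_refl subset_refl]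
    by (rule Mcomm_center_cover[OF \<phi>_closed])
qed

lemma schur_quot_hom_of_lift:
  assumes F: "mult_lie_alg F" and \<phi>: "\<phi> \<in> mla_hom F G"
    and onto: "(\<lambda>x. mla_center G #> \<phi> x) ` carrier F = carrier quot_center"
  defines "R \<equiv> {x \<in> carrier F. mla_center G #> \<phi> x = mla_center G}"
  shows "\<exists>\<Delta>. \<Delta> \<in> hom (schur_quot F R) (G\<lparr>carrier := Mcomm G (carrier G) (carrier G)\<rparr>)
           \<and> \<Delta> ` carrier (schur_quot F R)
               = {y \<in> Mcomm G (carrier G) (carrier G). mla_center G #> y = mla_center G}"
proof -
  interpret F: mult_lie F by (rule mult_lie.intro) fact
  let ?M = "Mcomm F (carrier F) (carrier F)"
  have hom: "\<phi> \<in> hom F G" using \<phi> by (simp add: mla_hom_def)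
  have M: "?M \<subseteq> carrier F"
    using F.subgroup_Mcomm subgroup.subset by blast
  have \<phi>_R: "\<phi> ` R \<subseteq> mla_center G"
    using hom coset_join1[OF _ _ subgroup_mla_center] unfolding R_def hom_def by auto
  have kernel: "Mcomm F R (carrier F) \<subseteq> kernel F G \<phi>"
    using Mcomm_subset_kernel[OF F \<phi> _ \<phi>_R] unfolding R_def by blast
  have "subgroup (Mcomm F R (carrier F)) F"
    unfolding R_def by (rule F.subgroup_Mcomm) auto
  moreover have "\<phi> ` (?M \<inter> R) = {y \<in> Mcomm G (carrier G) (carrier G). mla_center G #> y = mla_center G}"
    using Mcomm_image_of_lift[OF F \<phi> onto, symmetric] M unfolding R_def by auto
  moreover have "?M \<inter> R \<subseteq> carrier F" using M by blast
  ultimately show ?thesis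
    using hom_Mod_induced[OF F.is_group is_group hom _ kernel,
        where N = "?M \<inter> R" and S = "Mcomm G (carrier G) (carrier G)"]
    unfolding schur_quot_def by (intro exI[of _ "\<lambda>C. \<phi> (SOME x. x \<in> C)"]) simp
qed

end

theorem lemma4p13:
  fixes K :: "'k mul_lie" and F :: "'a mul_lie" and B :: "'a set"
    and \<pi> :: "'a \<Rightarrow> 'k set"
  assumes K: "mult_lie_alg K"
    and free: "free_mla F B"
    and hom: "\<pi> \<in> mla_hom F (quot_mla K (mla_center K))"
    and surj: "\<pi> ` carrier F = carrier (quot_mla K (mla_center K))"
  shows "\<exists>\<Delta>. \<Delta> \<in> hom (schur_quot F {x \<in> carrier F. \<pi> x = mla_center K})
                     (K\<lparr>carrier := Mcomm K (carrier K) (carrier K)\<rparr>)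
           \<and> \<Delta> ` carrier (schur_quot F {x \<in> carrier F. \<pi> x = mla_center K})
               = {y \<in> Mcomm K (carrier K) (carrier K). mla_center K #>\<^bsub>K\<^esub> y = mla_center K}
           \<and> (\<lambda>y. mla_center K #>\<^bsub>K\<^esub> y) ` Mcomm K (carrier K) (carrier K)
               = Mcomm (quot_mla K (mla_center K))
                   (carrier (quot_mla K (mla_center K))) (carrier (quot_mla K (mla_center K)))"
proof -
  interpret K: mult_lie K by (rule mult_lie.intro) fact
  have F: "mult_lie_alg F" using free by (rule free_mla_imp_mult_lie_alg)
  obtain \<phi> where \<phi>: "\<phi> \<in> mla_hom F K" and lift: "\<forall>x\<in>carrier F. mla_center K #>\<^bsub>K\<^esub> \<phi> x = \<pi> x"
    using K.free_mla_lift_quot_center[OF free hom surj] by blast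
  then have "(\<lambda>x. mla_center K #>\<^bsub>K\<^esub> \<phi> x) ` carrier F = carrier K.quot_center"
    using surj by (simp cong: image_cong)
  moreover have "{x \<in> carrier F. \<pi> x = mla_center K}
      = {x \<in> carrier F. mla_center K #>\<^bsub>K\<^esub> \<phi> x = mla_center K}"
    using lift by auto
  ultimately show ?thesis
    using K.schur_quot_hom_of_lift[OF F \<phi>] K.Mcomm_quot_center by simp
qed

end
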